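(* Let $[\underline R,\overline R]$ be a closed interval of a rich single-crossing domain and $\mu$ a non-trivial continuous probability measure on its Borel $\sigma$-algebra. Let $F^c=(t^c,q^c):[\underline R,\overline R]\to\mathbb{Z}$ be strategy-proof and individually rational with countable, closed range having finitely many limit points, and suppose $E(F)<E(F^c)$ for every strategy-proof, individually rational mechanism $F$ with finite range, where $E(F)=\int t\,d\mu$. Then for every $\epsilon>0$ there is a strategy-proof, individually rational mechanism $F^\epsilon$ with finite range such that $E(F^c)-E(F^\epsilon)\le\epsilon$. Further, if an optimal finite-range mechanism $F^*$ exists (maximizing $E$ among strategy-proof, individually rational mechanisms with finite range), then $E(F^c)\le E(F^* )$.
   Context: $\mathbb{Z}=[0,\infty)\times[0,1]$; $(t',q')<(t'',q'')$ means $t'<t''$, $q'<q''$; $x\le y$ means $x=y$ or $x<y$; $\square(z)=\{x:x\le z\}$. A classical preference is a complete transitive relation $R$ on $\mathbb{Z}$ strictly decreasing in $t$ for fixed $q$, strictly increasing in $q$ for fixed $t$, with closed upper and lower contour sets. Distinct classical preferences satisfy single-crossing if any indifference set of one meets any indifference set of the other in at most one point. A rich single-crossing domain is a set of pairwise single-crossing classical preferences such that for all $x'<x''$ some member is indifferent between them. For distinct members, $R'\prec R''$ means $\square(z)\cap\{x:xR''z\}\subseteq\square(z)\cap\{x:xR'z\}$ for all $z$; $\prec$ is a linear order; $[\underline R,\overline R]$ carries the subspace order topology and Borel $\sigma$-algebra. $\mu$ is non-trivial if every interval with more than one element has positive measure; continuous if for all Borel $A$ with $\mu(A)>0$ and $0<c<\mu(A)$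 there is Borel $B\subseteq A$ with $\mu(B)=c$. A mechanism $F$ is strategy-proof if $F(R')R'F(R'')$ for all $R',R''$, individually rational if $F(R)R(0,0)$ for all $R$. *)

theory Defs
  imports "HOL-Probability.Probability"
begin

definition ZZ :: "(real \<times> real) set" where
  "ZZ = {x. 0 \<le> fst x \<and> 0 \<le> snd x \<and> snd x \<le> 1}"

definition zlt :: "real \<times> real \<Rightarrow> real \<times> real \<Rightarrow> bool" where
  "zlt x y \<longleftrightarrow> fst x < fst y \<and> snd x < snd y"

definition zbox :: "real \<times> real \<Rightarrow> (real \<times> real) set" where
  "zbox z = {x. x = z \<or> zlt x z}"

text \<open>A preference is a binary relation on Z (R x y means x is weakly preferred to y).\<close>
type_synonym pref = "real \<times> real \<Rightarrow> real \<times> real \<Rightarrow> bool"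

definition indiff :: "pref \<Rightarrow> real \<times> real \<Rightarrow> real \<times> real \<Rightarrow> bool" where
  "indiff R x y \<longleftrightarrow> R x y \<and> R y x"

definition classical :: "pref \<Rightarrow> bool" where
  "classical R \<longleftrightarrow>
     (\<forall>x y. R x y \<longrightarrow> x \<in> ZZ \<and> y \<in> ZZ) \<and>
     (\<forall>x\<in>ZZ. \<forall>y\<in>ZZ. R x y \<or> R y x) \<and>
     (\<forall>x y z. R x y \<and> R y z \<longrightarrow> R x z) \<and>
     (\<forall>q t' t''. 0 \<le> q \<and> q \<le> 1 \<and> 0 \<le> t' \<and> t' < t'' \<longrightarrow>
         R (t', q) (t'', q) \<and> \<not> R (t'', q) (t', q)) \<and>
     (\<forall>t q' q''. 0 \<le> t \<and> 0 \<le> q' \<and> q' < q'' \<and> q'' \<le> 1 \<longrightarrow>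
         R (t, q'') (t, q') \<and> \<not> R (t, q') (t, q'')) \<and>
     (\<forall>z\<in>ZZ. closed {x\<in>ZZ. R x z} \<and> closed {x\<in>ZZ. R z x})"

definition single_crossing :: "pref \<Rightarrow> pref \<Rightarrow> bool" where
  "single_crossing R' R'' \<longleftrightarrow>
     (\<forall>z1\<in>ZZ. \<forall>z2\<in>ZZ. \<forall>x y.
        x \<in> {w\<in>ZZ. indiff R' w z1} \<inter> {w\<in>ZZ. indiff R'' w z2} \<and>
        y \<in> {w\<in>ZZ. indiff R' w z1} \<inter> {w\<in>ZZ. indiff R'' w z2} \<longrightarrow> x = y)"

definition rich_sc_domain :: "pref set \<Rightarrow> bool" where
  "rich_sc_domain D \<longleftrightarrow>
     (\<forall>R\<in>D. classical R) \<and>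
     (\<forall>R'\<in>D. \<forall>R''\<in>D. R' \<noteq> R'' \<longrightarrow> single_crossing R' R'') \<and>
     (\<forall>x'\<in>ZZ. \<forall>x''\<in>ZZ. zlt x' x'' \<longrightarrow> (\<exists>R\<in>D. indiff R x' x''))"

definition prec :: "pref \<Rightarrow> pref \<Rightarrow> bool" where
  "prec R' R'' \<longleftrightarrow> R' \<noteq> R'' \<and>
     (\<forall>z\<in>ZZ. zbox z \<inter> ZZ \<inter> {x. R'' x z} \<subseteq> zbox z \<inter> ZZ \<inter> {x. R' x z})"

definition preceq :: "pref \<Rightarrow> pref \<Rightarrow> bool" where
  "preceq R' R'' \<longleftrightarrow> R' = R'' \<or> prec R' R''"

definition pref_interval :: "pref set \<Rightarrow> pref \<Rightarrow> pref \<Rightarrow> pref set" where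
  "pref_interval D lo hi = {R\<in>D. preceq lo R \<and> preceq R hi}"

definition order_topology_on :: "pref set \<Rightarrow> pref topology" where
  "order_topology_on I = topology_generated_by
     (insert I ({{R\<in>I. prec a R} | a. a \<in> I} \<union> {{R\<in>I. prec R a} | a. a \<in> I}))"

definition borel_sets_on :: "pref set \<Rightarrow> pref set set" where
  "borel_sets_on I = sigma_sets I {U. openin (order_topology_on I) U}"

definition nontrivial_measure :: "pref set \<Rightarrow> pref measure \<Rightarrow> bool" where
  "nontrivial_measure I \<mu> \<longleftrightarrow>
     (\<forall>a\<in>I. \<forall>b\<in>I. prec a b \<longrightarrow> measure \<mu> {R\<in>I. preceq a R \<and> preceq R b} > 0)"

definition continuous_measure :: "pref measure \<Rightarrow> bool" where
  "continuous_measure \<mu> \<longleftrightarrow>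
     (\<forall>A\<in>sets \<mu>. \<forall>c. measure \<mu> A > 0 \<and> 0 < c \<and> c < measure \<mu> A \<longrightarrow>
        (\<exists>B\<in>sets \<mu>. B \<subseteq> A \<and> measure \<mu> B = c))"

definition mechanism :: "pref set \<Rightarrow> (pref \<Rightarrow> real \<times> real) \<Rightarrow> bool" where
  "mechanism I F \<longleftrightarrow> (\<forall>R\<in>I. F R \<in> ZZ)"

definition strategy_proof :: "pref set \<Rightarrow> (pref \<Rightarrow> real \<times> real) \<Rightarrow> bool" where
  "strategy_proof I F \<longleftrightarrow> (\<forall>R'\<in>I. \<forall>R''\<in>I. R' (F R') (F R''))"

definition individually_rational :: "pref set \<Rightarrow> (pref \<Rightarrow> real \<times> real) \<Rightarrow> bool" where
  "individually_rational I F \<longleftrightarrow> (\<forall>R\<in>I. R (F R) (0, 0))"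

definition revenue :: "pref measure \<Rightarrow> (pref \<Rightarrow> real \<times> real) \<Rightarrow> real" where
  "revenue \<mu> F = integral\<^sup>L \<mu> (\<lambda>R. fst (F R))"

definition finite_sp_ir :: "pref set \<Rightarrow> (pref \<Rightarrow> real \<times> real) \<Rightarrow> bool" where
  "finite_sp_ir I F \<longleftrightarrow> mechanism I F \<and> strategy_proof I F \<and>
     individually_rational I F \<and> finite (F ` I)"

end

theory Submission
  imports Defs
begin

text \<open>Truncate the menu of \<open>Fc\<close>: enumerate its countably many outcomes and let each type
  choose among \<open>(0,0)\<close> and the first \<open>n\<close> of them, keeping its \<open>Fc\<close>-outcome whenever that is on
  the menu. Each truncation is a strategy-proof, individually rational mechanism with finite range,
  and at every type it eventually coincides with \<open>Fc\<close>; as prices are non-negative, Fatou's lemma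
  gives \<open>E(Fc) \<le> liminf E(F\<^sub>n)\<close>, which yields both claims. The measure-theoretic content is that
  truncations are measurable, i.e. that \<open>{R. R x y}\<close> is a Borel set of the interval; this holds
  because it is (the complement of) a down-set for \<open>\<prec>\<close>, and \<open>\<prec>\<close> is total by single crossing.\<close>

section \<open>Classical preferences\<close>

lemma dist_Pair_same_snd: "dist (a::real, b::real) (c, b) = \<bar>a - c\<bar>"
  by (simp add: dist_Pair_Pair dist_real_def)

lemma dist_Pair_same_fst: "dist (a::real, b::real) (a, d) = \<bar>b - d\<bar>"
  by (simp add: dist_Pair_Pair dist_real_def)

lemma classical_in_ZZ: "classical R \<Longrightarrow> R x y \<Longrightarrow> x \<in> ZZ \<and> y \<in> ZZ"
  unfolding classical_def by blast

lemma classical_total: "classical R \<Longrightarrow> x \<in> ZZ \<Longrightarrow> y \<in> ZZ \<Longrightarrow> R x y \<or> R y x"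
  unfolding classical_def by blast

lemma classical_refl: "classical R \<Longrightarrow> x \<in> ZZ \<Longrightarrow> R x x"
  using classical_total by blast

lemma classical_trans: "classical R \<Longrightarrow> R x y \<Longrightarrow> R y z \<Longrightarrow> R x z"
  unfolding classical_def by blast

lemma classical_cheaper_strict:
  "classical R \<Longrightarrow> 0 \<le> q \<Longrightarrow> q \<le> 1 \<Longrightarrow> 0 \<le> t' \<Longrightarrow> t' < t'' \<Longrightarrow>
   R (t', q) (t'', q) \<and> \<not> R (t'', q) (t', q)"
  unfolding classical_def by blast

lemma classical_more_strict:
  "classical R \<Longrightarrow> 0 \<le> t \<Longrightarrow> 0 \<le> q' \<Longrightarrow> q' < q'' \<Longrightarrow> q'' \<le> 1 \<Longrightarrow>
   R (t, q'') (t, q') \<and> \<not> R (t, q') (t, q'')"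
  unfolding classical_def by blast

lemma classical_closed_lower: "classical R \<Longrightarrow> z \<in> ZZ \<Longrightarrow> closed {x\<in>ZZ. R x z}"
  unfolding classical_def by blast

lemma classical_closed_upper: "classical R \<Longrightarrow> z \<in> ZZ \<Longrightarrow> closed {x\<in>ZZ. R z x}"
  unfolding classical_def by blast

lemma classical_dominance:
  assumes R: "classical R" and x: "x \<in> ZZ" and y: "y \<in> ZZ"
    and le: "fst x \<le> fst y" "snd y \<le> snd x"
  shows "R x y \<and> (x \<noteq> y \<longrightarrow> \<not> R y x)"
proof -
  obtain a b c d where xy: "x = (a,b)" "y = (c,d)" by (cases x, cases y)
  have ab: "0 \<le> a" "0 \<le> b" "b \<le> 1" and cd: "0 \<le> c" "0 \<le> d" "d \<le> 1"
    using x y xy by (auto simp: ZZ_def)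
  have le': "a \<le> c" "d \<le> b" using le xy by auto
  have m: "(a,d) \<in> ZZ" using ab cd by (simp add: ZZ_def)
  have r1: "R (a,b) (a,d)"
    using classical_more_strict[OF R, of a d b] classical_refl[OF R] m ab cd le' by (cases "d < b") auto
  have r2: "R (a,d) (c,d)"
    using classical_cheaper_strict[OF R, of d a c] classical_refl[OF R] m ab cd le' by (cases "a < c") auto
  have "\<not> R y x" if "x \<noteq> y"
  proof
    assume ryx: "R y x"
    show False
    proof (cases "d < b")
      case True
      have "R (a,d) (a,b)" using classical_trans[OF R r2] ryx xy by simp
      then show False using classical_more_strict[OF R, of a d b] ab cd True by auto
    next
      case False
      then have "d = b" "a < c" using that le' xy by auto
      moreover have "R (c,d) (a,d)" using classical_trans[OF R _ r1] ryx xy \<open>d = b\<close> by simp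
      ultimately show False using classical_cheaper_strict[OF R, of d a c] ab cd by auto
    qed
  qed
  then show ?thesis using classical_trans[OF R r1 r2] xy by blast
qed

lemma classical_not_prefers_nhd:
  assumes R: "classical R" and z: "z \<in> ZZ"
  shows "\<not> R x z \<Longrightarrow> \<exists>e>0. \<forall>y. dist y x < e \<longrightarrow> \<not> R y z"
    and "\<not> R z x \<Longrightarrow> \<exists>e>0. \<forall>y. dist y x < e \<longrightarrow> \<not> R z y"
proof -
  have "open (- {w\<in>ZZ. R w z})" "open (- {w\<in>ZZ. R z w})"
    using classical_closed_lower[OF R z] classical_closed_upper[OF R z] by auto
  moreover have "R y z \<Longrightarrow> y \<in> ZZ" "R z y \<Longrightarrow> y \<in> ZZ" for y
    using classical_in_ZZ[OF R] by blast+
  ultimately show "\<not> R x z \<Longrightarrow> \<exists>e>0. \<forall>y. dist y x < e \<longrightarrow> \<not> R y z"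
    and "\<not> R z x \<Longrightarrow> \<exists>e>0. \<forall>y. dist y x < e \<longrightarrow> \<not> R z y"
    unfolding open_dist by (metis (mono_tags, lifting) ComplD ComplI mem_Collect_eq)+
qed

lemma single_crossing_commute: "single_crossing R1 R2 \<longleftrightarrow> single_crossing R2 R1"
  unfolding single_crossing_def by blast

lemma single_crossing_indiff_eq:
  assumes R1: "classical R1" and R2: "classical R2" and sc: "single_crossing R1 R2"
    and xz: "x \<in> ZZ" "z \<in> ZZ" "R1 x z" "R1 z x" "R2 x z" "R2 z x"
  shows "x = z"
proof -
  have "z \<in> {w\<in>ZZ. indiff R1 w z} \<inter> {w\<in>ZZ. indiff R2 w z}"
    using xz classical_refl[OF R1] classical_refl[OF R2] unfolding indiff_def by auto
  moreover have "x \<in> {w\<in>ZZ. indiff R1 w z} \<inter> {w\<in>ZZ. indiff R2 w z}"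
    using xz unfolding indiff_def by auto
  ultimately show "x = z" using sc xz(2) unfolding single_crossing_def by blast
qed

section \<open>Single crossing and the type order\<close>

definition sep_levels :: "pref \<Rightarrow> pref \<Rightarrow> real \<times> real \<Rightarrow> real set" where
  "sep_levels R1 R2 z =
     {q. \<exists>t. 0 \<le> t \<and> t < fst z \<and> 0 < q \<and> q < snd z \<and> \<not> R2 z (t,q) \<and> \<not> R1 (t,q) z}"

definition free_levels :: "pref \<Rightarrow> pref \<Rightarrow> real \<times> real \<Rightarrow> real set" where
  "free_levels R1 R2 z = {q. 0 < q \<and> q < snd z \<and> (\<not> R1 z (0,q) \<or> \<not> R2 z (0,q))}"

lemma free_levels_commute: "free_levels R1 R2 z = free_levels R2 R1 z"
  unfolding free_levels_def by auto

lemma sep_levels_open: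
  assumes R1: "classical R1" and R2: "classical R2" and z: "z \<in> ZZ"
  shows "open (sep_levels R1 R2 z)"
  unfolding open_dist
proof
  fix q assume "q \<in> sep_levels R1 R2 z"
  then obtain t where t: "0 \<le> t" "t < fst z" "0 < q" "q < snd z" "\<not> R2 z (t,q)" "\<not> R1 (t,q) z"
    unfolding sep_levels_def by blast
  obtain e1 where e1: "e1 > 0" "\<forall>y. dist y (t,q) < e1 \<longrightarrow> \<not> R2 z y"
    using classical_not_prefers_nhd(2)[OF R2 z t(5)] by blast
  obtain e2 where e2: "e2 > 0" "\<forall>y. dist y (t,q) < e2 \<longrightarrow> \<not> R1 y z"
    using classical_not_prefers_nhd(1)[OF R1 z t(6)] by blast
  define e where "e = min (min e1 e2) (min q (snd z - q))"
  have "q' \<in> sep_levels R1 R2 z" if "dist q' q < e" for q'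
  proof -
    have d: "\<bar>q' - q\<bar> < e" using that by (simp add: dist_real_def)
    then have "dist (t,q') (t,q) < e1" "dist (t,q') (t,q) < e2"
      unfolding e_def by (auto simp: dist_Pair_same_fst)
    then show ?thesis unfolding sep_levels_def using e1 e2 t d unfolding e_def
      by (intro CollectI exI[of _ t]) auto
  qed
  moreover have "e > 0" using e1 e2 t unfolding e_def by auto
  ultimately show "\<exists>e>0. \<forall>y. dist y q < e \<longrightarrow> y \<in> sep_levels R1 R2 z" by blast
qed

lemma sep_levels_disjoint:
  assumes R1: "classical R1" and R2: "classical R2" and z: "z \<in> ZZ"
  shows "sep_levels R1 R2 z \<inter> sep_levels R2 R1 z = {}"
proof (rule ccontr)
  assume "sep_levels R1 R2 z \<inter> sep_levels R2 R1 z \<noteq> {}"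
  then obtain q t1 t2 where
    t1: "0 \<le> t1" "0 < q" "q < snd z" "\<not> R2 z (t1,q)" "\<not> R1 (t1,q) z" and
    t2: "0 \<le> t2" "\<not> R1 z (t2,q)" "\<not> R2 (t2,q) z"
    unfolding sep_levels_def by blast
  have p: "(t1,q) \<in> ZZ" "(t2,q) \<in> ZZ" using t1 t2 z by (auto simp: ZZ_def)
  show False
  proof (cases "t1 \<le> t2")
    case True
    have "R1 (t1,q) (t2,q)" using classical_dominance[OF R1 p] True by simp
    moreover have "R1 (t2,q) z" using classical_total[OF R1 p(2) z] t2 by blast
    ultimately show False using classical_trans[OF R1] t1 by blast
  next
    case False
    have "R2 (t2,q) (t1,q)" using classical_dominance[OF R2 p(2) p(1)] False by simp
    moreover have "R2 (t1,q) z" using classical_total[OF R2 p(1) z] t1 by blast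
    ultimately show False using classical_trans[OF R2] t2 by blast
  qed
qed

lemma free_levels_connected:
  assumes R1: "classical R1" and R2: "classical R2" and z: "z \<in> ZZ"
  shows "connected (free_levels R1 R2 z)"
  unfolding connected_iff_interval
proof (intro ballI allI impI)
  fix x y w assume x: "x \<in> free_levels R1 R2 z" and y: "y \<in> free_levels R1 R2 z"
    and xw: "x \<le> w" and wy: "w \<le> y"
  have xs: "0 < x" "\<not> R1 z (0,x) \<or> \<not> R2 z (0,x)" and ys: "y < snd z"
    using x y unfolding free_levels_def by auto
  have p: "(0,w) \<in> ZZ" "(0,x) \<in> ZZ" using xs xw wy ys z by (auto simp: ZZ_def)
  have "R1 (0,w) (0,x)" "R2 (0,w) (0,x)"
    using classical_dominance[OF R1 p] classical_dominance[OF R2 p] xw by auto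
  then have "\<not> R1 z (0,w) \<or> \<not> R2 z (0,w)"
    using xs(2) classical_trans[OF R1] classical_trans[OF R2] by blast
  then show "w \<in> free_levels R1 R2 z" unfolding free_levels_def using xs xw wy ys by auto
qed

lemma closed_horizontal_slice: "closed C \<Longrightarrow> closed {t::real. (t, q::real) \<in> C}"
  using continuous_closed_vimage[of C "\<lambda>t. (t,q)"] by (simp add: vimage_def)

text \<open>On the horizontal line at level \<open>q\<close>, \<open>R1\<close> goes from strictly preferring the bundle
  to \<open>z\<close> (at price \<open>0\<close>) to strictly preferring \<open>z\<close> (at the price of \<open>z\<close>), so by connectedness it is
  indifferent at some price \<open>t\<close>. Single crossing forbids \<open>R2\<close> to be indifferent there too, and
  moving \<open>t\<close> slightly in the right direction yields a separating bundle.\<close>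

lemma free_level_in_sep_levels:
  assumes R1: "classical R1" and R2: "classical R2" and z: "z \<in> ZZ"
    and sc: "single_crossing R1 R2"
    and q: "0 < q" "q < snd z" and better: "\<not> R1 z (0,q)"
  shows "q \<in> sep_levels R1 R2 z \<union> sep_levels R2 R1 z"
proof -
  obtain tz qz where zz: "z = (tz,qz)" by (cases z)
  have zb: "0 \<le> tz" "q < qz" "qz \<le> 1" using z q zz by (auto simp: ZZ_def)
  have line: "(t,q) \<in> ZZ" if "0 \<le> t" for t using that q zb by (auto simp: ZZ_def)
  have tz_worse: "\<not> R1 (tz,q) z" "R1 z (tz,q)"
    using classical_dominance[OF R1 z line[OF zb(1)]] zz zb by auto
  have "tz \<noteq> 0" using tz_worse better by auto
  define A where "A = {t. (t,q) \<in> {w\<in>ZZ. R1 w z}}"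
  define B where "B = {t. (t,q) \<in> {w\<in>ZZ. R1 z w}}"
  have "closed A" "closed B" unfolding A_def B_def
    by (intro closed_horizontal_slice classical_closed_lower[OF R1 z]
        classical_closed_upper[OF R1 z])+
  moreover have "{0..tz} \<subseteq> A \<union> B"
  proof
    fix t assume "t \<in> {0..tz}"
    then have "(t,q) \<in> ZZ" using line by simp
    then show "t \<in> A \<union> B" using classical_total[OF R1 _ z] unfolding A_def B_def by blast
  qed
  moreover have "0 \<in> A" "tz \<in> B"
    using classical_total[OF R1 line[OF order_refl] z] line[OF order_refl] better
      line[OF zb(1)] tz_worse unfolding A_def B_def by auto
  ultimately have "A \<inter> B \<inter> {0..tz} \<noteq> {}"
    using connected_closedD[OF connected_Icc[of 0 tz], of A B] zb(1) by fastforce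
  then obtain t where t: "0 \<le> t" "t \<le> tz" "R1 (t,q) z" "R1 z (t,q)"
    unfolding A_def B_def by auto
  have "t \<noteq> 0" "t \<noteq> tz" using t better tz_worse by auto
  then have tt: "0 < t" "t < tz" using t by auto
  show ?thesis
  proof (cases "R2 (t,q) z")
    case False
    obtain e where e: "e > 0" "\<forall>y. dist y (t,q) < e \<longrightarrow> \<not> R2 y z"
      using classical_not_prefers_nhd(1)[OF R2 z False] by blast
    obtain d where d: "0 < d" "d < e" "d < t" using field_lbound_gt_zero[OF e(1) tt(1)] by blast
    have "\<not> R2 (t - d, q) z" using e d by (auto simp: dist_Pair_same_snd)
    moreover have "\<not> R1 z (t - d, q)"
      using classical_trans[OF R1 t(3)] classical_cheaper_strict[OF R1, of q "t - d" t] d q zb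
      by auto
    ultimately have "q \<in> sep_levels R2 R1 z"
      unfolding sep_levels_def using d tt q zz by (intro CollectI exI[of _ "t - d"]) auto
    then show ?thesis by blast
  next
    case True
    have "\<not> R2 z (t,q)"
      using single_crossing_indiff_eq[OF R1 R2 sc line[OF t(1)] z t(3,4) True] q zz by auto
    then obtain e where e: "e > 0" "\<forall>y. dist y (t,q) < e \<longrightarrow> \<not> R2 z y"
      using classical_not_prefers_nhd(2)[OF R2 z] by blast
    obtain d where d: "0 < d" "d < e" "d < tz - t"
      using field_lbound_gt_zero[OF e(1), of "tz - t"] tt by auto
    have "\<not> R2 z (t + d, q)" using e d by (auto simp: dist_Pair_same_snd)
    moreover have "\<not> R1 (t + d, q) z"
      using classical_trans[OF R1 _ t(4)] classical_cheaper_strict[OF R1, of q t "t + d"] d tt q zb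
      by auto
    ultimately have "q \<in> sep_levels R1 R2 z"
      unfolding sep_levels_def using d tt q zz by (intro CollectI exI[of _ "t + d"]) auto
    then show ?thesis by blast
  qed
qed

lemma free_levels_subset_sep_levels:
  assumes R1: "classical R1" and R2: "classical R2" and z: "z \<in> ZZ"
    and sc: "single_crossing R1 R2"
  shows "free_levels R1 R2 z \<subseteq> sep_levels R1 R2 z \<union> sep_levels R2 R1 z"
proof
  fix q assume "q \<in> free_levels R1 R2 z"
  then have q: "0 < q" "q < snd z" "\<not> R1 z (0,q) \<or> \<not> R2 z (0,q)"
    unfolding free_levels_def by auto
  from q(3) show "q \<in> sep_levels R1 R2 z \<union> sep_levels R2 R1 z"
  proof
    assume "\<not> R1 z (0,q)"
    then show ?thesis using free_level_in_sep_levels[OF R1 R2 z sc q(1,2)] by blast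
  next
    assume "\<not> R2 z (0,q)"
    then show ?thesis
      using free_level_in_sep_levels[OF R2 R1 z single_crossing_commute[THEN iffD1, OF sc] q(1,2)]
      by blast
  qed
qed

lemma sep_levels_meet_free_levels:
  assumes R1: "classical R1" and R2: "classical R2" and z: "z \<in> ZZ"
    and x: "x \<in> ZZ" "zlt x z" "\<not> R2 z x" "\<not> R1 x z"
  shows "free_levels R1 R2 z \<inter> sep_levels R1 R2 z \<noteq> {}"
proof -
  obtain a b where ab: "x = (a,b)" by (cases x)
  have abz: "a < fst z" "b < snd z" "0 \<le> a" "0 \<le> b" "snd z \<le> 1"
    using x z ab unfolding zlt_def by (auto simp: ZZ_def)
  obtain e where e: "e > 0" "\<forall>y. dist y x < e \<longrightarrow> \<not> R1 y z"
    using classical_not_prefers_nhd(1)[OF R1 z x(4)] by blast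
  obtain d where d: "0 < d" "d < e" "d < snd z - b"
    using field_lbound_gt_zero[OF e(1), of "snd z - b"] abz by auto
  define q where "q = b + d"
  have qq: "b < q" "q < snd z" "dist (a,q) x < e"
    unfolding q_def using d ab by (auto simp: dist_Pair_same_fst)
  have pz: "(a,q) \<in> ZZ" "(0,q) \<in> ZZ" using qq abz by (auto simp: ZZ_def)
  have "R2 (a,q) (a,b)" using classical_dominance[OF R2 pz(1) x(1)[unfolded ab]] qq by auto
  then have n2: "\<not> R2 z (a,q)" using classical_trans[OF R2] x(3) ab by blast
  have "R2 (0,q) (a,q)" using classical_dominance[OF R2 pz(2) pz(1)] abz by auto
  then have "\<not> R2 z (0,q)" using classical_trans[OF R2] n2 by blast
  then have "q \<in> free_levels R1 R2 z" unfolding free_levels_def using abz qq by auto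
  moreover have "q \<in> sep_levels R1 R2 z"
    unfolding sep_levels_def using e qq n2 abz by (intro CollectI exI[of _ a]) auto
  ultimately show ?thesis by blast
qed

text \<open>The free levels form an interval covered by the two disjoint open sets of separating
  levels; each of them meets it, contradicting connectedness.\<close>

lemma no_opposite_separations:
  assumes R1: "classical R1" and R2: "classical R2" and z: "z \<in> ZZ"
    and sc: "single_crossing R1 R2"
    and x: "x \<in> ZZ" "zlt x z" "\<not> R2 z x" "\<not> R1 x z"
    and y: "y \<in> ZZ" "zlt y z" "\<not> R1 z y" "\<not> R2 y z"
  shows False
proof -
  have "sep_levels R1 R2 z \<inter> free_levels R1 R2 z \<noteq> {}"
    using sep_levels_meet_free_levels[OF R1 R2 z x] by blast
  moreover have "sep_levels R2 R1 z \<inter> free_levels R1 R2 z \<noteq> {}"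
    using sep_levels_meet_free_levels[OF R2 R1 z y] free_levels_commute by blast
  moreover have "sep_levels R1 R2 z \<inter> sep_levels R2 R1 z \<inter> free_levels R1 R2 z = {}"
    using sep_levels_disjoint[OF R1 R2 z] by blast
  ultimately show False
    using connectedD[OF free_levels_connected[OF R1 R2 z] sep_levels_open[OF R1 R2 z]
        sep_levels_open[OF R2 R1 z] _ free_levels_subset_sep_levels[OF R1 R2 z sc]]
    by blast
qed

definition sep_points :: "pref \<Rightarrow> pref \<Rightarrow> (real \<times> real) set" where
  "sep_points R1 R2 = {z. \<exists>x\<in>ZZ. zlt x z \<and> \<not> R2 z x \<and> \<not> R1 x z}"

definition ZZ_pos :: "(real \<times> real) set" where
  "ZZ_pos = {z. 0 < fst z \<and> 0 < snd z \<and> snd z \<le> 1}"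

lemma ZZ_pos_subset_ZZ: "ZZ_pos \<subseteq> ZZ"
  unfolding ZZ_pos_def ZZ_def by auto

lemma connected_ZZ_pos: "connected ZZ_pos"
proof -
  have "ZZ_pos = {0<..} \<times> {0<..1}" unfolding ZZ_pos_def by auto
  moreover have "convex ({0::real<..} \<times> {0::real<..1})" by (intro convex_Times) auto
  ultimately show ?thesis by (simp add: convex_connected)
qed

lemma sep_points_open:
  assumes R1: "classical R1" and R2: "classical R2"
  shows "open (sep_points R1 R2)"
  unfolding open_dist
proof
  fix z assume "z \<in> sep_points R1 R2"
  then obtain x where x: "x \<in> ZZ" "zlt x z" "\<not> R2 z x" "\<not> R1 x z"
    unfolding sep_points_def by blast
  obtain e1 where e1: "e1 > 0" "\<forall>y. dist y z < e1 \<longrightarrow> \<not> R2 y x"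
    using classical_not_prefers_nhd(1)[OF R2 x(1,3)] by blast
  obtain e2 where e2: "e2 > 0" "\<forall>y. dist y z < e2 \<longrightarrow> \<not> R1 x y"
    using classical_not_prefers_nhd(2)[OF R1 x(1,4)] by blast
  define e where "e = min (min e1 e2) (min (fst z - fst x) (snd z - snd x))"
  have "y \<in> sep_points R1 R2" if d: "dist y z < e" for y
  proof -
    have "dist (fst y) (fst z) \<le> dist y z" "dist (snd y) (snd z) \<le> dist y z"
      by (rule dist_fst_le, rule dist_snd_le)
    then have "zlt x y" using d unfolding e_def dist_real_def zlt_def by auto
    moreover have "dist y z < e1" "dist y z < e2" using d unfolding e_def by auto
    ultimately show ?thesis unfolding sep_points_def using e1 e2 x(1) by blast
  qed
  moreover have "e > 0" using e1 e2 x(2) unfolding e_def zlt_def by auto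
  ultimately show "\<exists>e>0. \<forall>y. dist y z < e \<longrightarrow> y \<in> sep_points R1 R2" by blast
qed

lemma sep_points_disjoint:
  assumes R1: "classical R1" and R2: "classical R2" and sc: "single_crossing R1 R2"
  shows "sep_points R1 R2 \<inter> sep_points R2 R1 \<inter> ZZ_pos = {}"
proof (rule ccontr)
  assume "sep_points R1 R2 \<inter> sep_points R2 R1 \<inter> ZZ_pos \<noteq> {}"
  then obtain z x y where z: "z \<in> ZZ_pos"
    and x: "x \<in> ZZ" "zlt x z" "\<not> R2 z x" "\<not> R1 x z"
    and y: "y \<in> ZZ" "zlt y z" "\<not> R1 z y" "\<not> R2 y z"
    unfolding sep_points_def by blast
  show False using no_opposite_separations[OF R1 R2 _ sc x y] z ZZ_pos_subset_ZZ by blast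
qed

text \<open>Just below \<open>z\<close> on the axis \<open>t = 0\<close> the bundle is strictly preferred to \<open>z\<close>, so the level
  lies in the free levels, and a separating bundle at that level places \<open>z\<close> in a separating set.\<close>

lemma ZZ_pos_subset_sep_points:
  assumes R1: "classical R1" and R2: "classical R2" and sc: "single_crossing R1 R2"
  shows "ZZ_pos \<subseteq> sep_points R1 R2 \<union> sep_points R2 R1"
proof
  fix z assume z: "z \<in> ZZ_pos"
  obtain tz qz where zz: "z = (tz,qz)" by (cases z)
  have zb: "0 < tz" "0 < qz" "qz \<le> 1" using z zz unfolding ZZ_pos_def by auto
  have zZ: "z \<in> ZZ" using z ZZ_pos_subset_ZZ by blast
  have "\<not> R1 z (0,qz)"
    using classical_dominance[OF R1 _ zZ, of "(0,qz)"] zz zb by (auto simp: ZZ_def)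
  then obtain e where e: "e > 0" "\<forall>y. dist y (0,qz) < e \<longrightarrow> \<not> R1 z y"
    using classical_not_prefers_nhd(2)[OF R1 zZ] by blast
  obtain d where d: "0 < d" "d < e" "d < qz" using field_lbound_gt_zero[OF e(1) zb(2)] by blast
  have "\<not> R1 z (0, qz - d)" using e d by (auto simp: dist_Pair_same_fst)
  then have "qz - d \<in> free_levels R1 R2 z" unfolding free_levels_def using d zz by auto
  then have "qz - d \<in> sep_levels R1 R2 z \<union> sep_levels R2 R1 z"
    using free_levels_subset_sep_levels[OF R1 R2 zZ sc] by blast
  moreover have "sep_levels R1 R2 z \<noteq> {} \<Longrightarrow> z \<in> sep_points R1 R2"
    and "sep_levels R2 R1 z \<noteq> {} \<Longrightarrow> z \<in> sep_points R2 R1"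
    unfolding sep_levels_def sep_points_def zlt_def using zb zz by (fastforce simp: ZZ_def)+
  ultimately show "z \<in> sep_points R1 R2 \<union> sep_points R2 R1" by blast
qed

text \<open>A violation of \<open>prec R1 R2\<close> at \<open>z\<close> is a bundle \<open>x\<close> below \<open>z\<close> with \<open>R2 x z\<close> but not
  \<open>R1 x z\<close>; raising the quantity of \<open>x\<close> slightly makes both preferences strict.\<close>

lemma prec_if_no_sep_points:
  assumes R1: "classical R1" and R2: "classical R2"
    and empty: "sep_points R1 R2 \<inter> ZZ_pos = {}" and ne: "R1 \<noteq> R2"
  shows "prec R1 R2"
  unfolding prec_def
proof (intro conjI ne ballI subsetI)
  fix z x assume z: "z \<in> ZZ" and xin: "x \<in> zbox z \<inter> ZZ \<inter> {x. R2 x z}"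
  have xZ: "x \<in> ZZ" and r2: "R2 x z" and xb: "x = z \<or> zlt x z"
    using xin unfolding zbox_def by auto
  have "R1 x z"
  proof (rule ccontr)
    assume n: "\<not> R1 x z"
    then have lt: "zlt x z" using xb classical_refl[OF R1 z] by blast
    obtain a b where ab: "x = (a,b)" by (cases x)
    have abz: "a < fst z" "b < snd z" "0 \<le> a" "0 \<le> b" "snd z \<le> 1"
      using lt xZ z ab unfolding zlt_def by (auto simp: ZZ_def)
    obtain e where e: "e > 0" "\<forall>y. dist y x < e \<longrightarrow> \<not> R1 y z"
      using classical_not_prefers_nhd(1)[OF R1 z n] by blast
    obtain d where d: "0 < d" "d < e" "d < snd z - b"
      using field_lbound_gt_zero[OF e(1), of "snd z - b"] abz by auto
    have pz: "(a, b + d) \<in> ZZ" using d abz by (auto simp: ZZ_def)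
    have n1: "\<not> R1 (a, b + d) z" using e d ab by (auto simp: dist_Pair_same_fst)
    have "\<not> R2 x (a, b + d)" using classical_dominance[OF R2 pz xZ[unfolded ab]] d ab by auto
    then have n2: "\<not> R2 z (a, b + d)" using classical_trans[OF R2 r2] by blast
    have "z \<in> sep_points R1 R2"
      unfolding sep_points_def zlt_def using pz n1 n2 abz d
      by (intro CollectI bexI[of _ "(a, b + d)"]) auto
    moreover have "z \<in> ZZ_pos" using abz unfolding ZZ_pos_def by auto
    ultimately show False using empty by blast
  qed
  then show "x \<in> zbox z \<inter> ZZ \<inter> {x. R1 x z}" using xin by blast
qed

text \<open>The open sets of separating points of \<open>(R1, R2)\<close> and of \<open>(R2, R1)\<close> cover the connected set
  \<open>ZZ_pos\<close> disjointly, so one of them misses it.\<close>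

lemma single_crossing_prec_total:
  assumes R1: "classical R1" and R2: "classical R2" and sc: "single_crossing R1 R2"
    and ne: "R1 \<noteq> R2"
  shows "prec R1 R2 \<or> prec R2 R1"
proof -
  have "sep_points R1 R2 \<inter> ZZ_pos = {} \<or> sep_points R2 R1 \<inter> ZZ_pos = {}"
    using connectedD[OF connected_ZZ_pos sep_points_open[OF R1 R2] sep_points_open[OF R2 R1]
        sep_points_disjoint[OF R1 R2 sc] ZZ_pos_subset_sep_points[OF R1 R2 sc]] .
  then show ?thesis
    using prec_if_no_sep_points[OF R1 R2 _ ne] prec_if_no_sep_points[OF R2 R1 _ ne[symmetric]]
    by blast
qed

lemma pref_interval_subset: "pref_interval D lo hi \<subseteq> D"
  unfolding pref_interval_def by auto

lemma pref_interval_classical: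
  "rich_sc_domain D \<Longrightarrow> R \<in> pref_interval D lo hi \<Longrightarrow> classical R"
  using pref_interval_subset unfolding rich_sc_domain_def by blast

lemma pref_interval_prec_total:
  assumes dom: "rich_sc_domain D"
    and a: "a \<in> pref_interval D lo hi" and b: "b \<in> pref_interval D lo hi" and ne: "a \<noteq> b"
  shows "prec a b \<or> prec b a"
proof -
  have "single_crossing a b"
    using dom a b ne pref_interval_subset unfolding rich_sc_domain_def by blast
  then show ?thesis
    using single_crossing_prec_total pref_interval_classical[OF dom] a b ne by blast
qed

section \<open>Borel sets of the type interval\<close>

lemma openin_order_topology_on_rays:
  assumes "a \<in> I"
  shows "openin (order_topology_on I) {R\<in>I. prec a R}"
    and "openin (order_topology_on I) {R\<in>I. prec R a}"
  unfolding order_topology_on_def openin_topology_generated_by_iff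
  using assms by (auto intro: generate_topology_on.Basis)

lemma openin_borel_sets_on: "openin (order_topology_on I) U \<Longrightarrow> U \<in> borel_sets_on I"
  unfolding borel_sets_on_def by (rule sigma_sets.Basic) simp

lemma borel_sets_on_Diff_upper_ray: "a \<in> I \<Longrightarrow> I - {R\<in>I. prec a R} \<in> borel_sets_on I"
  unfolding borel_sets_on_def
  by (rule sigma_sets.Compl) (rule sigma_sets.Basic, simp add: openin_order_topology_on_rays)

text \<open>A down-closed set either has a largest element \<open>a\<close>, and then equals the complement of the
  open ray above \<open>a\<close>, or it is the union of the open rays below its elements.\<close>

lemma borel_sets_on_down_closed:
  assumes total: "\<forall>a\<in>I. \<forall>b\<in>I. a \<noteq> b \<longrightarrow> prec a b \<or> prec b a"
    and sub: "S \<subseteq> I" and down: "\<forall>b\<in>S. \<forall>a\<in>I. prec a b \<longrightarrow> a \<in> S"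
  shows "S \<in> borel_sets_on I"
proof (cases "\<exists>a\<in>S. \<forall>b\<in>S. \<not> prec a b")
  case True
  then obtain a where a: "a \<in> S" "\<forall>b\<in>S. \<not> prec a b" by blast
  have "S = I - {R\<in>I. prec a R}"
  proof
    show "S \<subseteq> I - {R\<in>I. prec a R}" using a sub by auto
    show "I - {R\<in>I. prec a R} \<subseteq> S"
    proof
      fix b assume b: "b \<in> I - {R\<in>I. prec a R}"
      show "b \<in> S"
      proof (cases "b = a")
        case False
        then have "prec b a" using total a(1) b sub by blast
        then show ?thesis using down a(1) b by blast
      qed (use a in simp)
    qed
  qed
  then show ?thesis using borel_sets_on_Diff_upper_ray a(1) sub by auto
next
  case False
  then have "S = (\<Union>a\<in>S. {R\<in>I. prec R a})" using sub down by blast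
  moreover have "openin (order_topology_on I) (\<Union>a\<in>S. {R\<in>I. prec R a})"
    using openin_order_topology_on_rays(2) sub by blast
  ultimately show ?thesis using openin_borel_sets_on by metis
qed

lemma prec_prefers_lower:
  "prec a b \<Longrightarrow> x \<in> ZZ \<Longrightarrow> y \<in> ZZ \<Longrightarrow> zlt x y \<Longrightarrow> b x y \<Longrightarrow> a x y"
  unfolding prec_def zbox_def by blast

text \<open>Since \<open>b\<close> strictly prefers the lower bundle \<open>y\<close>, so does \<open>b\<close> for a slightly more expensive
  \<open>y'\<close> still below \<open>x\<close>, and \<open>prec a b\<close> transfers this preference to \<open>a\<close>.\<close>

lemma prec_strictly_prefers_lower:
  assumes a: "classical a" and b: "classical b" and ab: "prec a b"
    and x: "x \<in> ZZ" and y: "y \<in> ZZ" and yx: "zlt y x" and nb: "\<not> b x y"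
  shows "\<not> a x y"
proof
  assume axy: "a x y"
  obtain c d where yc: "y = (c,d)" by (cases y)
  have cd: "c < fst x" "d < snd x" "0 \<le> c" "0 \<le> d" "d \<le> 1"
    using yx y yc unfolding zlt_def by (auto simp: ZZ_def)
  obtain e where e: "e > 0" "\<forall>w. dist w y < e \<longrightarrow> \<not> b x w"
    using classical_not_prefers_nhd(2)[OF b x nb] by blast
  obtain dd where dd: "0 < dd" "dd < e" "dd < fst x - c"
    using field_lbound_gt_zero[OF e(1), of "fst x - c"] cd by auto
  have y'Z: "(c + dd, d) \<in> ZZ" using cd dd by (simp add: ZZ_def)
  have "\<not> b x (c + dd, d)" using e dd yc by (auto simp: dist_Pair_same_snd)
  then have "b (c + dd, d) x" using classical_total[OF b y'Z x] by blast
  moreover have "zlt (c + dd, d) x" using cd dd unfolding zlt_def by auto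
  ultimately have "a (c + dd, d) x" using prec_prefers_lower[OF ab y'Z x] by blast
  then have "a (c + dd, d) y" using classical_trans[OF a _ axy] by blast
  then show False using classical_cheaper_strict[OF a, of d c "c + dd"] cd dd yc by auto
qed

lemma prefers_borel_sets_on:
  fixes lo hi :: pref
  assumes dom: "rich_sc_domain D"
  defines "I \<equiv> pref_interval D lo hi"
  shows "{R\<in>I. R x y} \<in> borel_sets_on I"
proof -
  have cls: "\<And>R. R \<in> I \<Longrightarrow> classical R"
    using pref_interval_classical[OF dom] unfolding I_def by blast
  have total: "\<forall>a\<in>I. \<forall>b\<in>I. a \<noteq> b \<longrightarrow> prec a b \<or> prec b a"
    using pref_interval_prec_total[OF dom] unfolding I_def by blast
  have empty: "{} \<in> borel_sets_on I" unfolding borel_sets_on_def by (rule sigma_sets.Empty)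
  have compl: "S \<in> borel_sets_on I \<Longrightarrow> I - S \<in> borel_sets_on I" for S
    unfolding borel_sets_on_def by (rule sigma_sets.Compl)
  have "x \<notin> ZZ \<or> y \<notin> ZZ \<or> zlt x y \<or> zlt y x \<or> (fst x \<le> fst y \<and> snd y \<le> snd x)
      \<or> (fst y \<le> fst x \<and> snd x \<le> snd y \<and> x \<noteq> y)"
    unfolding zlt_def prod_eq_iff by linarith
  then consider "x \<notin> ZZ \<or> y \<notin> ZZ" | "x \<in> ZZ" "y \<in> ZZ" "zlt x y"
    | "x \<in> ZZ" "y \<in> ZZ" "zlt y x" | "x \<in> ZZ" "y \<in> ZZ" "fst x \<le> fst y" "snd y \<le> snd x"
    | "x \<in> ZZ" "y \<in> ZZ" "fst y \<le> fst x" "snd x \<le> snd y" "x \<noteq> y"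
    by blast
  then show ?thesis
  proof cases
    case 1
    then have "{R\<in>I. R x y} = {}" using classical_in_ZZ cls by blast
    then show ?thesis using empty by metis
  next
    case 2
    have "\<forall>b\<in>{R\<in>I. R x y}. \<forall>a\<in>I. prec a b \<longrightarrow> a \<in> {R\<in>I. R x y}"
      using prec_prefers_lower[OF _ 2] by blast
    then show ?thesis by (intro borel_sets_on_down_closed[OF total]) auto
  next
    case 3
    have "\<forall>b\<in>{R\<in>I. \<not> R x y}. \<forall>a\<in>I. prec a b \<longrightarrow> a \<in> {R\<in>I. \<not> R x y}"
    proof (intro ballI impI)
      fix b a assume "b \<in> {R\<in>I. \<not> R x y}" "a \<in> I" "prec a b"
      then show "a \<in> {R\<in>I. \<not> R x y}"
        using prec_strictly_prefers_lower[OF cls cls _ 3, of a b] by simp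
    qed
    then have "{R\<in>I. \<not> R x y} \<in> borel_sets_on I"
      by (intro borel_sets_on_down_closed[OF total]) auto
    then have "I - {R\<in>I. \<not> R x y} \<in> borel_sets_on I" by (rule compl)
    moreover have "I - {R\<in>I. \<not> R x y} = {R\<in>I. R x y}" by auto
    ultimately show ?thesis by simp
  next
    case 4
    then have "{R\<in>I. R x y} = I - {}" using classical_dominance[OF cls 4] by blast
    then show ?thesis using compl[OF empty] by metis
  next
    case 5
    then have "{R\<in>I. R x y} = {}" using classical_dominance[OF cls 5(2,1,3,4)] 5(5) by blast
    then show ?thesis using empty by metis
  qed
qed

section \<open>Truncated mechanisms\<close>

lemma integral_eventually_greater_of_eventually_eq:
  fixes f :: "nat \<Rightarrow> 'a \<Rightarrow> real"
  assumes f_int: "\<And>n. integrable M (f n)" and f_nonneg: "\<And>n x. x \<in> space M \<Longrightarrow> 0 \<le> f n x"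
    and g_int: "integrable M g"
    and conv: "\<And>x. x \<in> space M \<Longrightarrow> eventually (\<lambda>n. f n x = g x) sequentially"
    and less: "y < integral\<^sup>L M g"
  shows "eventually (\<lambda>n. y < integral\<^sup>L M (f n)) sequentially"
proof (cases "y < 0")
  case True
  have "0 \<le> integral\<^sup>L M (f n)" for n using f_nonneg by (intro integral_nonneg_AE AE_I2)
  then show ?thesis using True by (intro always_eventually allI) (rule less_le_trans)
next
  case False
  have g_nonneg: "0 \<le> g x" if x: "x \<in> space M" for x
  proof -
    obtain N where "\<forall>n\<ge>N. f n x = g x" using conv[OF x] unfolding eventually_sequentially ..
    then show ?thesis using f_nonneg[OF x, of N] by simp
  qed
  have liminf_eq: "liminf (\<lambda>n. ennreal (f n x)) = ennreal (g x)" if "x \<in> space M" for x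
  proof -
    have "eventually (\<lambda>n. ennreal (f n x) = ennreal (g x)) sequentially"
      using conv[OF that] by (rule eventually_mono) simp
    then show ?thesis by (intro lim_imp_Liminf tendsto_eventually) simp_all
  qed
  have "ennreal y < ennreal (integral\<^sup>L M g)" using less False by (intro ennreal_lessI) auto
  also have "\<dots> = (\<integral>\<^sup>+x. ennreal (g x) \<partial>M)"
    using g_nonneg by (intro nn_integral_eq_integral[symmetric] g_int AE_I2) auto
  also have "\<dots> = (\<integral>\<^sup>+x. liminf (\<lambda>n. ennreal (f n x)) \<partial>M)"
    using liminf_eq by (intro nn_integral_cong) simp
  also have "\<dots> \<le> liminf (\<lambda>n. \<integral>\<^sup>+x. ennreal (f n x) \<partial>M)"
    using f_int by (intro nn_integral_liminf) auto
  also have "\<dots> = liminf (\<lambda>n. ennreal (integral\<^sup>L M (f n)))"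
    using f_nonneg by (simp add: nn_integral_eq_integral[OF f_int AE_I2])
  finally show ?thesis
    using False by (auto dest!: less_LiminfD elim!: eventually_mono simp: ennreal_less_iff)
qed

lemma classical_finite_has_best:
  assumes R: "classical R"
  shows "finite A \<Longrightarrow> A \<noteq> {} \<Longrightarrow> A \<subseteq> ZZ \<Longrightarrow> \<exists>a\<in>A. \<forall>m\<in>A. R a m"
proof (induction A rule: finite_ne_induct)
  case (singleton x)
  then show ?case using classical_refl[OF R] by simp
next
  case (insert x A)
  then obtain b where b: "b \<in> A" "\<forall>m\<in>A. R b m" by auto
  have "x \<in> ZZ" "b \<in> ZZ" using insert.prems b(1) by auto
  then consider "R x b" | "R b x" using classical_total[OF R] by blast
  then show ?case
  proof cases
    case 1
    then show ?thesis using b classical_trans[OF R] classical_refl[OF R \<open>x \<in> ZZ\<close>] by blast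
  next
    case 2
    then show ?thesis using b by blast
  qed
qed

text \<open>Scanning a list rather than choosing from a set keeps the selection measurable in \<open>R\<close>;
  the default \<open>(0,0)\<close> is never used on menus that contain a best element.\<close>

primrec menu_best :: "pref \<Rightarrow> (real \<times> real) set \<Rightarrow> (real \<times> real) list \<Rightarrow> real \<times> real" where
  "menu_best R N [] = (0,0)"
| "menu_best R N (a # L) = (if \<forall>m\<in>N. R a m then a else menu_best R N L)"

lemma menu_best_in_list_and_best:
  "\<exists>a\<in>set L. \<forall>m\<in>N. R a m \<Longrightarrow> menu_best R N L \<in> set L \<and> (\<forall>m\<in>N. R (menu_best R N L) m)"
  by (induction L) auto

lemma measurable_menu_best:
  assumes "\<forall>a\<in>set L. {R\<in>space M. \<forall>m\<in>N. R a m} \<in> sets M"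
  shows "(\<lambda>R. fst (menu_best R N L)) \<in> borel_measurable M"
  using assms
proof (induction L)
  case (Cons a L)
  have "(\<lambda>R. if \<forall>m\<in>N. R a m then fst a else fst (menu_best R N L)) \<in> borel_measurable M"
    using Cons by (intro measurable_If) auto
  then show ?case by (simp add: if_distrib)
qed simp

text \<open>Restricting \<open>F\<close> to the menu \<open>L\<close>: keeping \<open>F R\<close> whenever it is on the menu (rather than
  any favourite menu item) is what makes longer and longer menus converge pointwise to \<open>F\<close>.\<close>

definition truncation :: "(pref \<Rightarrow> real \<times> real) \<Rightarrow> (real \<times> real) list \<Rightarrow> pref \<Rightarrow> real \<times> real"
  where "truncation F L R = (if F R \<in> set L then F R else menu_best R (set L) L)"

lemma truncation_best:
  assumes cls: "\<And>R. R \<in> I \<Longrightarrow> classical R"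
    and F_sp: "strategy_proof I F" and F_ir: "individually_rational I F"
    and L: "set L \<subseteq> insert (0,0) (F ` I)" "set L \<subseteq> ZZ" "L \<noteq> []" and R: "R \<in> I"
  shows "truncation F L R \<in> set L \<and> (\<forall>m\<in>set L. R (truncation F L R) m)"
proof (cases "F R \<in> set L")
  case True
  have "R (F R) m" if "m \<in> set L" for m
    using that L(1) R F_sp F_ir unfolding strategy_proof_def individually_rational_def by blast
  then show ?thesis using True unfolding truncation_def by simp
next
  case False
  obtain a where "a \<in> set L" "\<forall>m\<in>set L. R a m"
    using classical_finite_has_best[OF cls[OF R] _ _ L(2)] L(3) by auto
  then have "menu_best R (set L) L \<in> set L \<and> (\<forall>m\<in>set L. R (menu_best R (set L) L) m)"
    by (intro menu_best_in_list_and_best) blast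
  then show ?thesis using False unfolding truncation_def by simp
qed

lemma truncation_finite_sp_ir:
  assumes cls: "\<And>R. R \<in> I \<Longrightarrow> classical R" and F_mech: "mechanism I F"
    and F_sp: "strategy_proof I F" and F_ir: "individually_rational I F"
    and L: "(0,0) \<in> set L" "set L \<subseteq> insert (0,0) (F ` I)"
  shows "finite_sp_ir I (truncation F L)"
proof -
  have LZ: "set L \<subseteq> ZZ" using L F_mech unfolding mechanism_def by (auto simp: ZZ_def)
  have "L \<noteq> []" using L(1) by auto
  then have best: "truncation F L R \<in> set L" "\<forall>m\<in>set L. R (truncation F L R) m" if "R \<in> I" for R
    using truncation_best[OF cls F_sp F_ir L(2) LZ _ that] by auto
  have "mechanism I (truncation F L)" using best LZ unfolding mechanism_def by blast
  moreover have "strategy_proof I (truncation F L)" using best unfolding strategy_proof_def by blast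
  moreover have "individually_rational I (truncation F L)"
    using best L(1) unfolding individually_rational_def by blast
  moreover have "finite (truncation F L ` I)" using best by (intro finite_subset[OF _ finite_set]) blast
  ultimately show ?thesis unfolding finite_sp_ir_def by blast
qed

text \<open>Distinct outcomes of a strategy-proof mechanism have distinct prices: at equal price the
  type receiving the smaller quantity would envy the other.\<close>

lemma strategy_proof_inj_on_fst:
  assumes cls: "\<And>R. R \<in> I \<Longrightarrow> classical R"
    and F_mech: "mechanism I F" and F_sp: "strategy_proof I F"
  shows "inj_on fst (F ` I)"
proof (rule inj_onI, rule ccontr)
  fix x y assume "x \<in> F ` I" "y \<in> F ` I" and eq: "fst x = fst y" and ne: "x \<noteq> y"
  then obtain R1 R2 where R: "R1 \<in> I" "R2 \<in> I" "x = F R1" "y = F R2" by blast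
  have Z: "x \<in> ZZ" "y \<in> ZZ" using R F_mech unfolding mechanism_def by auto
  have "snd x \<noteq> snd y" using eq ne by (simp add: prod_eq_iff)
  then consider "snd x < snd y" | "snd y < snd x" by linarith
  then show False
  proof cases
    case 1
    then have "\<not> R1 x y" using classical_dominance[OF cls[OF R(1)] Z(2,1)] eq ne by auto
    then show False using F_sp R unfolding strategy_proof_def by blast
  next
    case 2
    then have "\<not> R2 y x" using classical_dominance[OF cls[OF R(2)] Z] eq ne by auto
    then show False using F_sp R unfolding strategy_proof_def by blast
  qed
qed

lemma truncation_measurable:
  assumes pref_sets: "\<And>x y. {R\<in>space M. R x y} \<in> sets M"
    and F_meas: "(\<lambda>R. fst (F R)) \<in> borel_measurable M" and inj: "inj_on fst (F ` space M)"
  shows "(\<lambda>R. fst (truncation F L R)) \<in> borel_measurable M"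
proof -
  have "{R\<in>space M. F R \<in> set L} = (\<lambda>R. fst (F R)) -` (fst ` (set L \<inter> F ` space M)) \<inter> space M"
  proof (intro equalityI subsetI)
    fix R assume "R \<in> (\<lambda>R. fst (F R)) -` (fst ` (set L \<inter> F ` space M)) \<inter> space M"
    then obtain m where "m \<in> set L" "m \<in> F ` space M" "fst (F R) = fst m" "R \<in> space M" by auto
    moreover from this have "F R = m" using inj unfolding inj_on_def by blast
    ultimately show "R \<in> {R\<in>space M. F R \<in> set L}" by simp
  qed auto
  also have "\<dots> \<in> sets M"
    by (intro measurable_sets[OF F_meas] borel_closed finite_imp_closed) auto
  finally have "{R\<in>space M. F R \<in> set L} \<in> sets M" .
  moreover have "(\<lambda>R. fst (menu_best R (set L) L)) \<in> borel_measurable M"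
    using pref_sets by (intro measurable_menu_best ballI sets.sets_Collect_finite_All) auto
  ultimately show ?thesis
    unfolding truncation_def if_distrib[of fst] by (intro measurable_If F_meas)
qed

lemma finite_sp_ir_revenue_approaches:
  fixes D :: "pref set" and lo hi :: pref and \<mu> :: "pref measure"
    and Fc :: "pref \<Rightarrow> real \<times> real"
  defines "I \<equiv> pref_interval D lo hi"
  assumes dom: "rich_sc_domain D" and fin: "finite_measure \<mu>" and space: "space \<mu> = I"
    and sets: "sets \<mu> = borel_sets_on I"
    and Fc_mech: "mechanism I Fc" and Fc_sp: "strategy_proof I Fc"
    and Fc_ir: "individually_rational I Fc" and Fc_countable: "countable (Fc ` I)"
    and Fc_int: "integrable \<mu> (\<lambda>R. fst (Fc R))" and less: "y < revenue \<mu> Fc"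
  shows "\<exists>F. finite_sp_ir I F \<and> y < revenue \<mu> F"
proof -
  have cls: "\<And>R. R \<in> I \<Longrightarrow> classical R"
    using pref_interval_classical[OF dom] unfolding I_def by blast
  define M where "M = insert (0,0) (Fc ` I)"
  define L where "L n = (0,0) # map (from_nat_into M) [0..<n]" for n
  define F where "F n = truncation Fc (L n)" for n
  have M: "M \<noteq> {}" "countable M" unfolding M_def using Fc_countable by auto
  have "(0,0) \<in> M" unfolding M_def by simp
  then have "set (L n) \<subseteq> M" for n unfolding L_def using from_nat_into[OF M(1)] by auto
  then have L: "(0,0) \<in> set (L n)" "set (L n) \<subseteq> insert (0,0) (Fc ` I)" for n
    unfolding L_def M_def by auto
  have F_fin: "finite_sp_ir I (F n)" for n
    unfolding F_def using truncation_finite_sp_ir[OF cls Fc_mech Fc_sp Fc_ir L] .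
  have F_meas: "(\<lambda>R. fst (F n R)) \<in> borel_measurable \<mu>" for n
  proof -
    have "{R\<in>space \<mu>. R x y} \<in> sets \<mu>" for x y
      unfolding space sets I_def using prefers_borel_sets_on[OF dom] .
    moreover have "inj_on fst (Fc ` space \<mu>)"
      unfolding space using strategy_proof_inj_on_fst[OF cls Fc_mech Fc_sp] .
    ultimately show ?thesis
      unfolding F_def using truncation_measurable borel_measurable_integrable[OF Fc_int] by blast
  qed
  have F_nonneg: "0 \<le> fst (F n R)" if "R \<in> space \<mu>" for n R
  proof -
    have "F n R \<in> ZZ" using F_fin[of n] that space unfolding finite_sp_ir_def mechanism_def by blast
    then show ?thesis by (simp add: ZZ_def)
  qed
  have F_int: "integrable \<mu> (\<lambda>R. fst (F n R))" for n
  proof (rule finite_measure.integrable_const_bound[OF fin _ F_meas])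
    have "finite (F n ` I)" using F_fin[of n] unfolding finite_sp_ir_def by blast
    then show "AE R in \<mu>. norm (fst (F n R)) \<le> (\<Sum>m\<in>F n ` I. \<bar>fst m\<bar>)"
      using member_le_sum[of _ "F n ` I" "\<lambda>m. \<bar>fst m\<bar>"] space by (intro AE_I2) simp
  qed
  have F_conv: "eventually (\<lambda>n. fst (F n R) = fst (Fc R)) sequentially" if "R \<in> space \<mu>" for R
  proof -
    have "Fc R \<in> M" using that space unfolding M_def by blast
    then obtain k where k: "from_nat_into M k = Fc R" using from_nat_into_surj[OF M(2)] by blast
    have "F n R = Fc R" if "k < n" for n
    proof -
      have "from_nat_into M k \<in> set (L n)" using that unfolding L_def by force
      then have "Fc R \<in> set (L n)" using k by simp
      then show ?thesis unfolding F_def truncation_def by simp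
    qed
    then show ?thesis unfolding eventually_sequentially by (intro exI[of _ "Suc k"]) simp
  qed
  have "eventually (\<lambda>n. y < revenue \<mu> (F n)) sequentially"
    using integral_eventually_greater_of_eventually_eq[OF F_int F_nonneg Fc_int F_conv] less
    unfolding revenue_def by blast
  then obtain n where "y < revenue \<mu> (F n)" by (auto simp: eventually_sequentially)
  then show ?thesis using F_fin by blast
qed

theorem mainTheorem15:
  fixes D :: "pref set" and lo hi :: pref and \<mu> :: "pref measure"
    and Fc :: "pref \<Rightarrow> real \<times> real"
  defines "I \<equiv> pref_interval D lo hi"
  assumes dom: "rich_sc_domain D" and lo: "lo \<in> D" and hi: "hi \<in> D"
    and prob: "prob_space \<mu>" and space: "space \<mu> = I"
    and sets: "sets \<mu> = borel_sets_on I"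
    and nontriv: "nontrivial_measure I \<mu>" and cont: "continuous_measure \<mu>"
    and Fc_mech: "mechanism I Fc" and Fc_sp: "strategy_proof I Fc"
    and Fc_ir: "individually_rational I Fc"
    and Fc_countable: "countable (Fc ` I)" and Fc_closed: "closed (Fc ` I)"
    and Fc_limpts: "finite {x. x islimpt (Fc ` I)}"
    and better: "\<And>F. finite_sp_ir I F \<Longrightarrow> revenue \<mu> F < revenue \<mu> Fc"
  shows "(\<forall>\<epsilon>>0. \<exists>F\<epsilon>. finite_sp_ir I F\<epsilon> \<and> revenue \<mu> Fc - revenue \<mu> F\<epsilon> \<le> \<epsilon>)
       \<and> (\<forall>Fs. finite_sp_ir I Fs \<and> (\<forall>F. finite_sp_ir I F \<longrightarrow> revenue \<mu> F \<le> revenue \<mu> Fs)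
              \<longrightarrow> revenue \<mu> Fc \<le> revenue \<mu> Fs)"
proof -
  have "(0,0) \<in> ZZ" by (simp add: ZZ_def)
  then have "R (0,0) (0,0)" if "R \<in> I" for R
    using classical_refl pref_interval_classical[OF dom] that unfolding I_def by blast
  then have zero: "finite_sp_ir I (\<lambda>R. (0,0))"
    unfolding finite_sp_ir_def mechanism_def strategy_proof_def individually_rational_def
    by (auto simp: ZZ_def image_constant_conv)
  have "0 < revenue \<mu> Fc" using better[OF zero] by (simp add: revenue_def)
  then have "integrable \<mu> (\<lambda>R. fst (Fc R))"
    using not_integrable_integral_eq unfolding revenue_def by force
  then have approx: "\<exists>F. finite_sp_ir I F \<and> y < revenue \<mu> F" if "y < revenue \<mu> Fc" for y
    using finite_sp_ir_revenue_approaches[OF dom prob_space.finite_measure[OF prob]]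
      space sets Fc_mech Fc_sp Fc_ir Fc_countable that unfolding I_def by blast
  show ?thesis
  proof (intro conjI allI impI)
    fix \<epsilon> :: real assume "\<epsilon> > 0"
    then show "\<exists>F\<epsilon>. finite_sp_ir I F\<epsilon> \<and> revenue \<mu> Fc - revenue \<mu> F\<epsilon> \<le> \<epsilon>"
      using approx[of "revenue \<mu> Fc - \<epsilon>"] by force
  next
    fix Fs assume "finite_sp_ir I Fs \<and> (\<forall>F. finite_sp_ir I F \<longrightarrow> revenue \<mu> F \<le> revenue \<mu> Fs)"
    then show "revenue \<mu> Fc \<le> revenue \<mu> Fs" using approx[of "revenue \<mu> Fs"] by force
  qed
qed

end
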